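(* Let ${}^*\mathbb{Q}$ be a field elementarily equivalent to $\mathbb{Q}$ (in the ring language), with ${}^*\mathbb{Z}$, ${}^*\mathbb{N}$, $\mathcal{P}({}^*\mathbb{N})$, the maps $d_p$ and the order $<$ as described in the context. For $a_0,a_1\in{}^*\mathbb{Q}\setminus\{0\}$, we have $a_0=a_1$ if and only if $d_p(a_0)=d_p(a_1)$ for all $p\in\mathcal{P}({}^*\mathbb{N})$ and $a_0a_1>0$. Equivalently, the map ${}^*\mathbb{Q}\setminus\{0\}\to\prod_{p\in\mathcal{P}({}^*\mathbb{N})}p^{{}^*\mathbb{Z}}\times\{\pm1\}$, $a\mapsto((d_p(a))_p,\operatorname{sgn}(a))$, is an injective group homomorphism, where $\operatorname{sgn}(a)=1$ if $a>0$ and $-1$ if $a<0$.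
   Context: Fix a first-order formula $Z(x)$ in the ring language defining $\mathbb{Z}$ in $\mathbb{Q}$ (such exists by J. Robinson). Let ${}^*\mathbb{Z}=Z({}^*\mathbb{Q})$ and let ${}^*\mathbb{N}$ be the set of elements of ${}^*\mathbb{Q}$ that are sums of four squares of elements of ${}^*\mathbb{Z}$. For $x,y\in{}^*\mathbb{Z}$, $x\mid y$ means $y=zx$ for some $z\in{}^*\mathbb{Z}$, $z\neq0$. $\mathcal{P}({}^*\mathbb{N})$ is the set of $p\in{}^*\mathbb{N}$, $p\ne1$, whose only divisors in ${}^*\mathbb{Z}$ are $\pm1,\pm p$. For such $p$, $p^{{}^*\mathbb{N}}$ is the set of $y\in{}^*\mathbb{N}$ such that $y=1$ or every $z\in{}^*\mathbb{N}$, $z\neq\pm1$, with $z\mid y$ satisfies $p\mid z$; and $p^{{}^*\mathbb{Z}}=p^{{}^*\mathbb{N}}\cup\{1/x:x\in p^{{}^*\mathbb{N}}\}$, a group under multiplication. For $x\in{}^*\mathbb{Z}\setminus\{0\}$, $d_p(x)$ is the unique $y\in p^{{}^*\mathbb{N}}$ with $y\mid x$ and $py\nmid x$; it is extended to ${}^*\mathbb{Q}\setminus\{0\}$ by $d_p(a/b)=d_p(a)/d_p(b)$ for $a,b\in{}^*\mathbb{Z}\setminus\{0\}$. The order on ${}^*\mathbb{Q}$: for $a_1,a_2\in{}^*\mathbb{Z}$ and $b_1,b_2\in{}^*\mathbb{N}\setminus\{0\}$, $a_1/b_1<a_2/b_2$ iff $a_2b_1-a_1b_2\in{}^*\mathbb{N}$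 (and they are distinct). *)

theory Defs
  imports Complex_Main
begin

datatype rterm = RVar nat | RZero | ROne | RAdd rterm rterm | RMul rterm rterm | RNeg rterm

datatype rform = FEq rterm rterm | FNot rform | FAnd rform rform | FEx nat rform

fun teval :: "(nat \<Rightarrow> 'a::comm_ring_1) \<Rightarrow> rterm \<Rightarrow> 'a" where
  "teval e (RVar n) = e n"
| "teval e RZero = 0"
| "teval e ROne = 1"
| "teval e (RAdd s t) = teval e s + teval e t"
| "teval e (RMul s t) = teval e s * teval e t"
| "teval e (RNeg t) = - teval e t"

fun sat :: "(nat \<Rightarrow> 'a::comm_ring_1) \<Rightarrow> rform \<Rightarrow> bool" where
  "sat e (FEq s t) = (teval e s = teval e t)"
| "sat e (FNot \<phi>) = (\<not> sat e \<phi>)"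
| "sat e (FAnd \<phi> \<psi>) = (sat e \<phi> \<and> sat e \<psi>)"
| "sat e (FEx n \<phi>) = (\<exists>x. sat (e(n := x)) \<phi>)"

fun tvars :: "rterm \<Rightarrow> nat set" where
  "tvars (RVar n) = {n}"
| "tvars RZero = {}"
| "tvars ROne = {}"
| "tvars (RAdd s t) = tvars s \<union> tvars t"
| "tvars (RMul s t) = tvars s \<union> tvars t"
| "tvars (RNeg t) = tvars t"

fun fvars :: "rform \<Rightarrow> nat set" where
  "fvars (FEq s t) = tvars s \<union> tvars t"
| "fvars (FNot \<phi>) = fvars \<phi>"
| "fvars (FAnd \<phi> \<psi>) = fvars \<phi> \<union> fvars \<psi>"
| "fvars (FEx n \<phi>) = fvars \<phi> - {n}"

definition sentence :: "rform \<Rightarrow> bool" where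
  "sentence \<phi> \<longleftrightarrow> fvars \<phi> = {}"

definition elem_equiv_Q :: "'a::field itself \<Rightarrow> bool" where
  "elem_equiv_Q _ \<longleftrightarrow>
     (\<forall>\<phi>. sentence \<phi> \<longrightarrow> (sat (\<lambda>_. 0::'a) \<phi> \<longleftrightarrow> sat (\<lambda>_. 0::rat) \<phi>))"

definition defines_Z_in_Q :: "rform \<Rightarrow> bool" where
  "defines_Z_in_Q Z \<longleftrightarrow> fvars Z \<subseteq> {0} \<and> (\<forall>q::rat. sat (\<lambda>_. q) Z \<longleftrightarrow> q \<in> \<int>)"

definition sZ :: "rform \<Rightarrow> 'a::field set" where
  "sZ Z = {x. sat (\<lambda>_. x) Z}"

definition sN :: "rform \<Rightarrow> 'a::field set" where
  "sN Z = {x. \<exists>a\<in>sZ Z. \<exists>b\<in>sZ Z. \<exists>c\<in>sZ Z. \<exists>d\<in>sZ Z. x = a^2 + b^2 + c^2 + d^2}"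

definition sdvd :: "rform \<Rightarrow> 'a::field \<Rightarrow> 'a \<Rightarrow> bool" where
  "sdvd Z x y \<longleftrightarrow> (\<exists>z\<in>sZ Z. z \<noteq> 0 \<and> y = z * x)"

definition sprimes :: "rform \<Rightarrow> 'a::field set" where
  "sprimes Z = {p \<in> sN Z. p \<noteq> 1 \<and>
      (\<forall>d\<in>sZ Z. sdvd Z d p \<longrightarrow> d = 1 \<or> d = -1 \<or> d = p \<or> d = -p)}"

definition ppowN :: "rform \<Rightarrow> 'a::field \<Rightarrow> 'a set" where
  "ppowN Z p = {y \<in> sN Z. y = 1 \<or>
      (\<forall>z\<in>sN Z. z \<noteq> 1 \<and> z \<noteq> -1 \<and> sdvd Z z y \<longrightarrow> sdvd Z p z)}"

definition ppowZ :: "rform \<Rightarrow> 'a::field \<Rightarrow> 'a set" where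
  "ppowZ Z p = ppowN Z p \<union> {1 / x | x. x \<in> ppowN Z p}"

definition dpZ :: "rform \<Rightarrow> 'a::field \<Rightarrow> 'a \<Rightarrow> 'a" where
  "dpZ Z p x = (THE y. y \<in> ppowN Z p \<and> sdvd Z y x \<and> \<not> sdvd Z (p * y) x)"

definition dpQ :: "rform \<Rightarrow> 'a::field \<Rightarrow> 'a \<Rightarrow> 'a" where
  "dpQ Z p q = (SOME r. \<exists>a\<in>sZ Z. \<exists>b\<in>sZ Z. a \<noteq> 0 \<and> b \<noteq> 0 \<and> q = a / b \<and>
                          r = dpZ Z p a / dpZ Z p b)"

definition sless :: "rform \<Rightarrow> 'a::field \<Rightarrow> 'a \<Rightarrow> bool" where
  "sless Z x y \<longleftrightarrow> x \<noteq> y \<and>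
     (\<exists>a1\<in>sZ Z. \<exists>a2\<in>sZ Z. \<exists>b1\<in>sN Z - {0}. \<exists>b2\<in>sN Z - {0}.
        x = a1 / b1 \<and> y = a2 / b2 \<and> a2 * b1 - a1 * b2 \<in> sN Z)"

definition ssgn :: "rform \<Rightarrow> 'a::field \<Rightarrow> 'a" where
  "ssgn Z a = (if sless Z 0 a then 1 else if sless Z a 0 then -1 else 0)"

end

theory Submission
  imports Defs "HOL-Computational_Algebra.Primes" "HOL-Library.Discrete_Functions"
begin

text \<open>Every property of \<open>\<rat>\<close> that the argument uses is expressible by a first-order sentence
  of the ring language once the integers are replaced by the defining formula \<open>Z\<close>: existence and
  uniqueness of \<open>d\<^sub>p\<close> on \<open>\<^sup>*\<int>\<close>, multiplicativity of \<open>d\<^sub>p\<close> on \<open>\<^sup>*\<rat>\<close> with values in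
  \<open>p\<^sup>\<int>\<close>, the rule of signs for the order, and the fact that two nonzero elements with positive
  product and the same valuations coincide. In \<open>\<rat>\<close> these sentences hold because
  \<open>\<^sup>*\<nat>\<close> is \<open>\<nat>\<close> there (Lagrange's four-square theorem) and \<open>\<P>(\<^sup>*\<nat>)\<close> consists of the
  primes and \<open>0\<close>; hence they hold in \<open>\<^sup>*\<rat>\<close>, and the theorem follows from them
  algebraically.\<close>

section \<open>Lagrange's four-square theorem\<close>

definition sum4sq :: "int \<Rightarrow> bool" where
  "sum4sq n \<longleftrightarrow> (\<exists>a b c d. n = a\<^sup>2 + b\<^sup>2 + c\<^sup>2 + d\<^sup>2)"

lemma sum4sq_mult:
  assumes "sum4sq m" "sum4sq n" shows "sum4sq (m * n)"
proof -
  obtain a b c d where m: "m = a\<^sup>2 + b\<^sup>2 + c\<^sup>2 + d\<^sup>2" using assms(1) sum4sq_def by blast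
  obtain e f g h where n: "n = e\<^sup>2 + f\<^sup>2 + g\<^sup>2 + h\<^sup>2" using assms(2) sum4sq_def by blast
  have "m * n = (a*e - b*f - c*g - d*h)\<^sup>2 + (a*f + b*e + c*h - d*g)\<^sup>2 +
      (a*g - b*h + c*e + d*f)\<^sup>2 + (a*h + b*g - c*f + d*e)\<^sup>2"
    unfolding m n by (simp add: power2_eq_square algebra_simps)
  then show ?thesis unfolding sum4sq_def by blast
qed

lemma dvd_abs_less_imp_zero:
  fixes p m :: int assumes "p dvd m" "\<bar>m\<bar> < p" shows "m = 0"
proof (rule ccontr)
  assume "m \<noteq> 0"
  then have "\<bar>p\<bar> \<le> \<bar>m\<bar>" using assms(1) by (rule dvd_imp_le_int)
  then show False using assms(2) by linarith
qed

lemma prime_dvd_sq_diff_imp_eq: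
  fixes p a a' :: int
  assumes p: "prime p" and "0 \<le> a" "2 * a < p" "0 \<le> a'" "2 * a' < p"
    and d: "p dvd a\<^sup>2 - a'\<^sup>2"
  shows "a = a'"
proof -
  have "a\<^sup>2 - a'\<^sup>2 = (a - a') * (a + a')" by (simp add: power2_eq_square algebra_simps)
  then have "p dvd a - a' \<or> p dvd a + a'" using d p prime_dvd_mult_iff by metis
  then show ?thesis
    using dvd_abs_less_imp_zero[of p "a - a'"] dvd_abs_less_imp_zero[of p "a + a'"] assms by auto
qed

text \<open>The \<open>(p + 1)/2\<close> values \<open>a\<^sup>2\<close> and the \<open>(p + 1)/2\<close> values \<open>-1 - b\<^sup>2\<close>
  (for \<open>0 \<le> a, b \<le> (p - 1)/2\<close>) cannot be pairwise distinct modulo \<open>p\<close>.\<close>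
lemma odd_prime_dvd_sq_plus_sq_plus_one:
  fixes p :: int assumes p: "prime p" "odd p"
  obtains a b where "p dvd a\<^sup>2 + b\<^sup>2 + 1"
proof -
  define k where "k = (p - 1) div 2"
  have p2: "p \<ge> 2" using p prime_ge_2_int by blast
  have kp: "2 * k + 1 = p" unfolding k_def using p(2) by presburger
  define A where "A = (\<lambda>a. a\<^sup>2 mod p) ` {0..k}"
  define B where "B = (\<lambda>b. (-1 - b\<^sup>2) mod p) ` {0..k}"
  have "inj_on (\<lambda>a. a\<^sup>2 mod p) {0..k}"
    by (rule inj_onI) (use prime_dvd_sq_diff_imp_eq[OF p(1)] kp in \<open>auto simp: mod_eq_dvd_iff\<close>)
  then have cA: "card A = nat (k + 1)" unfolding A_def by (simp add: card_image)
  have "inj_on (\<lambda>b. (-1 - b\<^sup>2) mod p) {0..k}"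
  proof (rule inj_onI)
    fix b b' assume h: "b \<in> {0..k}" "b' \<in> {0..k}" "(-1 - b\<^sup>2) mod p = (-1 - b'\<^sup>2) mod p"
    then have "p dvd b'\<^sup>2 - b\<^sup>2" by (simp add: mod_eq_dvd_iff algebra_simps)
    then show "b = b'" using prime_dvd_sq_diff_imp_eq[OF p(1), of b' b] h kp by auto
  qed
  then have cB: "card B = nat (k + 1)" unfolding B_def by (simp add: card_image)
  have "A \<union> B \<subseteq> {0..<p}" unfolding A_def B_def using p2 by auto
  then have "card (A \<union> B) \<le> nat p" using card_mono[of "{0..<p}"] by fastforce
  moreover have "card A + card B = card (A \<union> B) + card (A \<inter> B)"
    using card_Un_Int[of A B] by (simp add: A_def B_def)
  moreover have "card A + card B = nat p + 1" using cA cB kp p2 by simp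
  ultimately have "card (A \<inter> B) \<noteq> 0" by linarith
  then have "A \<inter> B \<noteq> {}" by auto
  then obtain a b where "a\<^sup>2 mod p = (-1 - b\<^sup>2) mod p" unfolding A_def B_def by auto
  then have "p dvd a\<^sup>2 - (-1 - b\<^sup>2)" by (simp add: mod_eq_dvd_iff)
  then show ?thesis using that[of a b] by (simp add: algebra_simps)
qed

lemma sum4sq_of_double:
  fixes x y z w p :: int
  assumes "x\<^sup>2 + y\<^sup>2 + z\<^sup>2 + w\<^sup>2 = 2 * p" shows "sum4sq p"
proof -
  have pairing: "sum4sq p" if sum: "x\<^sup>2 + y\<^sup>2 + z\<^sup>2 + w\<^sup>2 = 2 * p" and ev: "even (x - y)" "even (z - w)"
    for x y z w
  proof -
    obtain B D where "x - y = 2 * B" "z - w = 2 * D" using ev by (blast elim: evenE)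
    then have "x\<^sup>2 + y\<^sup>2 + z\<^sup>2 + w\<^sup>2 = 2 * ((y + B)\<^sup>2 + B\<^sup>2 + (w + D)\<^sup>2 + D\<^sup>2)"
      by (simp add: eq_diff_eq power2_eq_square algebra_simps)
    then have "p = (y + B)\<^sup>2 + B\<^sup>2 + (w + D)\<^sup>2 + D\<^sup>2" using sum by simp
    then show ?thesis unfolding sum4sq_def by blast
  qed
  have "even (x\<^sup>2 + y\<^sup>2 + z\<^sup>2 + w\<^sup>2)" using assms by simp
  then consider "even (x - y)" "even (z - w)" | "even (x - z)" "even (y - w)"
    | "even (x - w)" "even (y - z)" by auto
  then show ?thesis
    using pairing[of x y z w] pairing[of x z y w] pairing[of x w y z] assms
    by cases (simp_all add: algebra_simps)
qed

lemma sum4sq_of_triple_congruent: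
  fixes x y z w p :: int
  assumes sum: "x\<^sup>2 + y\<^sup>2 + z\<^sup>2 + w\<^sup>2 = 3 * p"
    and "x mod 3 = y mod 3" "y mod 3 = z mod 3" "3 dvd w"
  shows "sum4sq p"
proof -
  have "3 dvd x + y + z" "3 dvd x - y + w" "3 dvd x - z - w" "3 dvd y - z + w"
    using assms(2-4) by presburger+
  then obtain A B C D where
    eqs: "x + y + z = 3 * A" "x - y + w = 3 * B" "x - z - w = 3 * C" "y - z + w = 3 * D"
    by (meson dvdE)
  have "9 * (A\<^sup>2 + B\<^sup>2 + C\<^sup>2 + D\<^sup>2) = (3 * A)\<^sup>2 + (3 * B)\<^sup>2 + (3 * C)\<^sup>2 + (3 * D)\<^sup>2"
    by (simp add: power_mult_distrib)
  also have "\<dots> = (x + y + z)\<^sup>2 + (x - y + w)\<^sup>2 + (x - z - w)\<^sup>2 + (y - z + w)\<^sup>2"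
    unfolding eqs ..
  also have "\<dots> = 3 * (x\<^sup>2 + y\<^sup>2 + z\<^sup>2 + w\<^sup>2)"
    by (simp add: power2_eq_square algebra_simps)
  finally have "A\<^sup>2 + B\<^sup>2 + C\<^sup>2 + D\<^sup>2 = p" using sum by simp
  then show ?thesis unfolding sum4sq_def by metis
qed

lemma power2_mod_3: "(q::int)\<^sup>2 mod 3 = of_bool (\<not> 3 dvd q)"
proof -
  have h: "q\<^sup>2 mod 3 = (q mod 3)\<^sup>2 mod 3" by (simp add: power_mod)
  have "q mod 3 = 0 \<or> q mod 3 = 1 \<or> q mod 3 = 2" by presburger
  then show ?thesis by (elim disjE) (simp_all add: h dvd_eq_mod_eq_0)
qed

lemma sign_normal_mod_3:
  fixes q :: int
  obtains s where "s\<^sup>2 = q\<^sup>2" "s mod 3 = of_bool (\<not> 3 dvd q)"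
proof (cases "q mod 3 = 2")
  case True
  then have "(- q) mod 3 = 1" "\<not> 3 dvd q" by presburger+
  then show ?thesis using that[of "- q"] by simp
next
  case False
  then have "q mod 3 = 0 \<or> q mod 3 = 1" by presburger
  then show ?thesis using that[of q] by (auto simp: dvd_eq_mod_eq_0)
qed

lemma sum4sq_of_triple_normal:
  fixes x y z w p :: int
  assumes sum: "x\<^sup>2 + y\<^sup>2 + z\<^sup>2 + w\<^sup>2 = 3 * p"
    and "3 dvd w" "3 dvd x \<longleftrightarrow> 3 dvd y" "3 dvd y \<longleftrightarrow> 3 dvd z"
  shows "sum4sq p"
proof -
  obtain x' where x': "x'\<^sup>2 = x\<^sup>2" "x' mod 3 = of_bool (\<not> 3 dvd x)"
    by (rule sign_normal_mod_3)
  obtain y' where y': "y'\<^sup>2 = y\<^sup>2" "y' mod 3 = of_bool (\<not> 3 dvd y)"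
    by (rule sign_normal_mod_3)
  obtain z' where z': "z'\<^sup>2 = z\<^sup>2" "z' mod 3 = of_bool (\<not> 3 dvd z)"
    by (rule sign_normal_mod_3)
  have "x'\<^sup>2 + y'\<^sup>2 + z'\<^sup>2 + w\<^sup>2 = 3 * p" using sum x'(1) y'(1) z'(1) by simp
  moreover have "x' mod 3 = y' mod 3" using x'(2) y'(2) assms(3) by simp
  moreover have "y' mod 3 = z' mod 3" using y'(2) z'(2) assms(4) by simp
  ultimately show ?thesis using assms(2) by (rule sum4sq_of_triple_congruent)
qed

lemma sum4sq_of_triple_cases:
  fixes x y z w p :: int
  assumes sum: "x\<^sup>2 + y\<^sup>2 + z\<^sup>2 + w\<^sup>2 = 3 * p"
  shows "(3 dvd w \<and> (3 dvd x \<longleftrightarrow> 3 dvd y) \<and> (3 dvd y \<longleftrightarrow> 3 dvd z)) \<or>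
      (3 dvd z \<and> (3 dvd x \<longleftrightarrow> 3 dvd y) \<and> (3 dvd y \<longleftrightarrow> 3 dvd w)) \<or>
      (3 dvd y \<and> (3 dvd x \<longleftrightarrow> 3 dvd z) \<and> (3 dvd z \<longleftrightarrow> 3 dvd w)) \<or>
      (3 dvd x \<and> (3 dvd y \<longleftrightarrow> 3 dvd z) \<and> (3 dvd z \<longleftrightarrow> 3 dvd w))"
proof -
  have count: "3 dvd (of_bool (\<not> A) + of_bool (\<not> B) + of_bool (\<not> C) + of_bool (\<not> D) :: int)
      \<Longrightarrow> (D \<and> (A \<longleftrightarrow> B) \<and> (B \<longleftrightarrow> C)) \<or> (C \<and> (A \<longleftrightarrow> B) \<and> (B \<longleftrightarrow> D)) \<or>
        (B \<and> (A \<longleftrightarrow> C) \<and> (C \<longleftrightarrow> D)) \<or> (A \<and> (B \<longleftrightarrow> C) \<and> (C \<longleftrightarrow> D))" for A B C D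
    by (cases A; cases B; cases C; cases D) simp_all
  have "3 dvd x\<^sup>2 mod 3 + y\<^sup>2 mod 3 + z\<^sup>2 mod 3 + w\<^sup>2 mod 3"
  proof -
    have "3 dvd q\<^sup>2 - q\<^sup>2 mod 3" for q :: int by (simp add: minus_mod_eq_mult_div)
    then have "3 dvd (x\<^sup>2 - x\<^sup>2 mod 3) + (y\<^sup>2 - y\<^sup>2 mod 3) + (z\<^sup>2 - z\<^sup>2 mod 3) + (w\<^sup>2 - w\<^sup>2 mod 3)"
      by (intro dvd_add)
    moreover have "3 dvd x\<^sup>2 + y\<^sup>2 + z\<^sup>2 + w\<^sup>2" using sum by simp
    ultimately have "3 dvd (x\<^sup>2 + y\<^sup>2 + z\<^sup>2 + w\<^sup>2) - ((x\<^sup>2 - x\<^sup>2 mod 3) + (y\<^sup>2 - y\<^sup>2 mod 3)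
        + (z\<^sup>2 - z\<^sup>2 mod 3) + (w\<^sup>2 - w\<^sup>2 mod 3))"
      by (intro dvd_diff)
    then show ?thesis by (simp add: algebra_simps)
  qed
  then have "3 dvd (of_bool (\<not> 3 dvd x) + of_bool (\<not> 3 dvd y) + of_bool (\<not> 3 dvd z)
      + of_bool (\<not> 3 dvd w) :: int)"
    unfolding power2_mod_3 by simp
  then show ?thesis by (rule count)
qed

lemma sum4sq_of_triple:
  fixes x y z w p :: int
  assumes sum: "x\<^sup>2 + y\<^sup>2 + z\<^sup>2 + w\<^sup>2 = 3 * p" shows "sum4sq p"
  using sum4sq_of_triple_cases[OF sum] sum4sq_of_triple_normal[of x y z w p]
    sum4sq_of_triple_normal[of x y w z p] sum4sq_of_triple_normal[of x z w y p]
    sum4sq_of_triple_normal[of y z w x p] sum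
  by (auto simp: algebra_simps)

lemma int_floor_sqrt_bracket:
  fixes n :: int assumes "0 \<le> n"
  obtains m where "0 \<le> m" "m\<^sup>2 \<le> n" "n < (m + 1)\<^sup>2"
proof
  let ?m = "int (floor_sqrt (nat n))"
  have "int ((floor_sqrt (nat n))\<^sup>2) \<le> int (nat n)"
    using floor_sqrt_power2_le by (simp only: of_nat_le_iff)
  then show "?m\<^sup>2 \<le> n" using assms by simp
  have "int (nat n) < int ((Suc (floor_sqrt (nat n)))\<^sup>2)"
    using Suc_floor_sqrt_power2_gt by (simp only: of_nat_less_iff)
  then show "n < (?m + 1)\<^sup>2" using assms by (simp add: add.commute)
qed simp

lemma int_box4_collision:
  fixes f :: "int \<times> int \<times> int \<times> int \<Rightarrow> int \<times> int" and m p :: int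
  assumes "0 \<le> m" "0 \<le> p" "p < (m + 1)\<^sup>2"
    and "f ` ({0..m} \<times> {0..m} \<times> {0..m} \<times> {0..m}) \<subseteq> {0..<p} \<times> {0..<p}"
  obtains x1 y1 z1 w1 x2 y2 z2 w2 where "{x1, y1, z1, w1, x2, y2, z2, w2} \<subseteq> {0..m}"
    "(x1, y1, z1, w1) \<noteq> (x2, y2, z2, w2)" "f (x1, y1, z1, w1) = f (x2, y2, z2, w2)"
proof -
  define S where "S = {0..m} \<times> {0..m} \<times> {0..m} \<times> {0..m}"
  have "card (f ` S) \<le> card ({0..<p} \<times> {0..<p})"
    using assms(4) unfolding S_def by (intro card_mono) auto
  also have "int \<dots> = p * p" using assms(2) by (simp add: card_cartesian_product)
  also have "\<dots> < (m + 1)\<^sup>2 * (m + 1)\<^sup>2" using assms(1-3) by (intro mult_strict_mono) auto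
  also have "\<dots> = int (card S)"
    using assms(1) by (simp add: S_def card_cartesian_product power2_eq_square)
  finally have "\<not> inj_on f S" by (intro pigeonhole) simp
  then obtain t1 t2 where "t1 \<in> S" "t2 \<in> S" "t1 \<noteq> t2" "f t1 = f t2"
    unfolding inj_on_def by blast
  moreover obtain x1 y1 z1 w1 x2 y2 z2 w2 where "t1 = (x1, y1, z1, w1)" "t2 = (x2, y2, z2, w2)"
    by (cases t1, cases t2) auto
  ultimately show ?thesis unfolding S_def by (intro that[of x1 y1 z1 w1 x2 y2 z2 w2]) auto
qed

text \<open>For \<open>p dvd a\<^sup>2 + b\<^sup>2 + 1\<close>, two vectors of \<open>[0, m]\<^sup>4\<close> colliding under
  \<open>(x + a z + b w, y + b z - a w) mod p\<close> differ by some \<open>(X, Y, Z, W)\<close> with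
  \<open>X\<^sup>2 + Y\<^sup>2 + Z\<^sup>2 + W\<^sup>2 \<equiv> (a\<^sup>2 + b\<^sup>2 + 1) (Z\<^sup>2 + W\<^sup>2) \<equiv> 0 (mod p)\<close>.\<close>
lemma odd_prime_dvd_small_sum4sq:
  fixes p :: int assumes p: "prime p" "odd p"
  obtains X Y Z W where "p dvd X\<^sup>2 + Y\<^sup>2 + Z\<^sup>2 + W\<^sup>2"
    "0 < X\<^sup>2 + Y\<^sup>2 + Z\<^sup>2 + W\<^sup>2" "X\<^sup>2 + Y\<^sup>2 + Z\<^sup>2 + W\<^sup>2 < 4 * p"
proof -
  obtain a b where ab: "p dvd a\<^sup>2 + b\<^sup>2 + 1" using odd_prime_dvd_sq_plus_sq_plus_one[OF p] .
  have p2: "p \<ge> 2" using p prime_ge_2_int by blast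
  obtain m where m: "0 \<le> m" "m\<^sup>2 \<le> p" "p < (m + 1)\<^sup>2" using int_floor_sqrt_bracket[of p] p2 by auto
  have "m\<^sup>2 \<noteq> p" using p prime_power_iff[of m 2] by auto
  with m have mlt: "m\<^sup>2 < p" by simp
  define f where "f = (\<lambda>(x, y, z, w). ((x + a*z + b*w) mod p, (y + b*z - a*w) mod p))"
  have "0 \<le> p" using p2 by simp
  have "f ` ({0..m} \<times> {0..m} \<times> {0..m} \<times> {0..m}) \<subseteq> {0..<p} \<times> {0..<p}"
    using p2 by (auto simp: f_def)
  then obtain x1 y1 z1 w1 x2 y2 z2 w2 where t: "{x1, y1, z1, w1, x2, y2, z2, w2} \<subseteq> {0..m}"
    "(x1, y1, z1, w1) \<noteq> (x2, y2, z2, w2)" "f (x1, y1, z1, w1) = f (x2, y2, z2, w2)"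
    by (rule int_box4_collision[OF m(1) \<open>0 \<le> p\<close> m(3)])
  define X Y Z W where "X = x1 - x2" and "Y = y1 - y2" and "Z = z1 - z2" and "W = w1 - w2"
  have "p dvd X + (a*Z + b*W)" "p dvd Y + (b*Z - a*W)"
    using t(3) by (auto simp: f_def X_def Y_def Z_def W_def mod_eq_dvd_iff algebra_simps)
  moreover have "X\<^sup>2 + Y\<^sup>2 + Z\<^sup>2 + W\<^sup>2 = (X + (a*Z + b*W)) * (X - (a*Z + b*W))
      + (Y + (b*Z - a*W)) * (Y - (b*Z - a*W)) + (a\<^sup>2 + b\<^sup>2 + 1) * (Z\<^sup>2 + W\<^sup>2)"
    by (simp add: power2_eq_square algebra_simps)
  ultimately have dvd: "p dvd X\<^sup>2 + Y\<^sup>2 + Z\<^sup>2 + W\<^sup>2" using ab by (simp add: dvd_add dvd_mult2)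
  have pos: "0 < X\<^sup>2 + Y\<^sup>2 + Z\<^sup>2 + W\<^sup>2"
    using t(2) by (auto simp: X_def Y_def Z_def W_def add_pos_nonneg add_nonneg_pos)
  have sq_le: "q\<^sup>2 \<le> m\<^sup>2" if "\<bar>q\<bar> \<le> m" for q :: int
    using power_mono[OF that, of 2] by simp
  have "\<bar>X\<bar> \<le> m" "\<bar>Y\<bar> \<le> m" "\<bar>Z\<bar> \<le> m" "\<bar>W\<bar> \<le> m"
    using t(1) by (auto simp: X_def Y_def Z_def W_def)
  then have "X\<^sup>2 \<le> m\<^sup>2" "Y\<^sup>2 \<le> m\<^sup>2" "Z\<^sup>2 \<le> m\<^sup>2" "W\<^sup>2 \<le> m\<^sup>2"
    by (simp_all add: sq_le)
  then show ?thesis using mlt by (intro that[OF dvd pos]) linarith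
qed

lemma sum4sq_prime:
  fixes p :: int assumes p: "prime p" shows "sum4sq p"
proof (cases "even p")
  case True
  then have "p = 2" using primes_dvd_imp_eq[of 2 p] p by auto
  then show ?thesis unfolding sum4sq_def by (intro exI[of _ 1] exI[of _ 0]) simp
next
  case False
  obtain X Y Z W where N: "p dvd X\<^sup>2 + Y\<^sup>2 + Z\<^sup>2 + W\<^sup>2"
    "0 < X\<^sup>2 + Y\<^sup>2 + Z\<^sup>2 + W\<^sup>2" "X\<^sup>2 + Y\<^sup>2 + Z\<^sup>2 + W\<^sup>2 < 4 * p"
    using odd_prime_dvd_small_sum4sq[OF p False] .
  then obtain k where k: "X\<^sup>2 + Y\<^sup>2 + Z\<^sup>2 + W\<^sup>2 = k * p" by (auto elim: dvdE simp: mult.commute)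
  have "p > 0" using p prime_gt_0_int by blast
  then have "0 < k" "k < 4" using N(2,3) k by (auto simp: zero_less_mult_iff)
  then consider "k = 1" | "k = 2" | "k = 3" by linarith
  then show ?thesis
  proof cases
    case 1 then show ?thesis using k unfolding sum4sq_def by auto
  next
    case 2 then show ?thesis using k sum4sq_of_double by auto
  next
    case 3 then show ?thesis using k sum4sq_of_triple by auto
  qed
qed

lemma sum4sq_nonneg:
  fixes n :: int assumes "0 \<le> n" shows "sum4sq n"
proof -
  have "sum4sq (int n)" for n :: nat
  proof (induction n rule: less_induct)
    case (less n)
    show ?case
    proof (cases "n \<le> 1")
      case True
      then have "int n = (int n)\<^sup>2 + 0\<^sup>2 + 0\<^sup>2 + 0\<^sup>2" by (cases n) auto
      then show ?thesis unfolding sum4sq_def by blast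
    next
      case False
      then obtain p k where "prime p" "n = p * k" using prime_factor_nat[of n] by (auto elim: dvdE)
      moreover from this have "k < n" using False prime_gt_1_nat[of p] n_less_m_mult_n[of k p]
        by (cases "k = 0") auto
      ultimately show ?thesis using less sum4sq_mult sum4sq_prime[of "int p"] by simp
    qed
  qed
  from this[of "nat n"] show ?thesis using assms by simp
qed

section \<open>Definable relations of \<open>\<^sup>*\<rat>\<close>\<close>

lemma teval_cong: "\<forall>n\<in>tvars t. e n = e' n \<Longrightarrow> teval e t = teval e' t"
  by (induction t) auto

lemma sat_cong: "\<forall>n\<in>fvars \<phi>. e n = e' n \<Longrightarrow> sat e \<phi> = sat e' \<phi>"
proof (induction \<phi> arbitrary: e e')
  case (FEq s t)
  then show ?case using teval_cong[of s e e'] teval_cong[of t e e'] by auto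
next
  case (FNot \<phi>)
  then show ?case by simp
next
  case (FAnd \<phi> \<psi>)
  have "sat e \<phi> = sat e' \<phi>" by (rule FAnd.IH(1)) (use FAnd.prems in auto)
  moreover have "sat e \<psi> = sat e' \<psi>" by (rule FAnd.IH(2)) (use FAnd.prems in auto)
  ultimately show ?case by simp
next
  case (FEx n \<phi>)
  have "sat (e(n := x)) \<phi> = sat (e'(n := x)) \<phi>" for x
    by (rule FEx.IH) (use FEx.prems in auto)
  then show ?case by simp
qed

definition fOr :: "rform \<Rightarrow> rform \<Rightarrow> rform" where
  "fOr A B = FNot (FAnd (FNot A) (FNot B))"

definition fImp :: "rform \<Rightarrow> rform \<Rightarrow> rform" where
  "fImp A B = FNot (FAnd A (FNot B))"

definition fAll :: "nat \<Rightarrow> rform \<Rightarrow> rform" where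
  "fAll n A = FNot (FEx n (FNot A))"

definition fNe :: "rterm \<Rightarrow> rterm \<Rightarrow> rform" where
  "fNe s t = FNot (FEq s t)"

definition fConj :: "rform list \<Rightarrow> rform" where
  "fConj As = foldr FAnd As (FEq RZero RZero)"

lemma sat_derived_connectives [simp]:
  "sat e (fOr A B) \<longleftrightarrow> sat e A \<or> sat e B"
  "sat e (fImp A B) \<longleftrightarrow> (sat e A \<longrightarrow> sat e B)"
  "sat e (fAll n A) \<longleftrightarrow> (\<forall>x. sat (e(n := x)) A)"
  "sat e (fNe s t) \<longleftrightarrow> teval e s \<noteq> teval e t"
  by (auto simp: fOr_def fImp_def fAll_def fNe_def)

lemma sat_fConj [simp]: "sat e (fConj As) \<longleftrightarrow> (\<forall>A\<in>set As. sat e A)"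
  unfolding fConj_def by (induction As) auto

lemma fvars_derived_connectives [simp]:
  "fvars (fOr A B) = fvars A \<union> fvars B"
  "fvars (fImp A B) = fvars A \<union> fvars B"
  "fvars (fAll n A) = fvars A - {n}"
  "fvars (fNe s t) = tvars s \<union> tvars t"
  by (auto simp: fOr_def fImp_def fAll_def fNe_def)

lemma fvars_fConj [simp]: "fvars (fConj As) = (\<Union>A\<in>set As. fvars A)"
  unfolding fConj_def by (induction As) auto

text \<open>The graphs of \<open>dpZ\<close> and \<open>dpQ\<close>, which unlike the \<open>THE\<close>/\<open>SOME\<close> in their definitions are
  first-order definable.\<close>
definition is_dpZ :: "rform \<Rightarrow> 'a::field \<Rightarrow> 'a \<Rightarrow> 'a \<Rightarrow> bool" where
  "is_dpZ Z p x u \<longleftrightarrow> u \<in> ppowN Z p \<and> sdvd Z u x \<and> \<not> sdvd Z (p * u) x"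

definition is_dpQ :: "rform \<Rightarrow> 'a::field \<Rightarrow> 'a \<Rightarrow> 'a \<Rightarrow> bool" where
  "is_dpQ Z p a r \<longleftrightarrow> (\<exists>x y u v. x \<in> sZ Z \<and> y \<in> sZ Z \<and> x \<noteq> 0 \<and> y \<noteq> 0 \<and> a * y = x
     \<and> is_dpZ Z p x u \<and> is_dpZ Z p y v \<and> r * v = u)"

lemma sless_iff_mult: "sless Z x y \<longleftrightarrow> x \<noteq> y \<and>
    (\<exists>a1 a2 b1 b2. a1 \<in> sZ Z \<and> a2 \<in> sZ Z \<and> b1 \<in> sN Z \<and> b1 \<noteq> 0 \<and> b2 \<in> sN Z \<and> b2 \<noteq> 0 \<and>
       x * b1 = a1 \<and> y * b2 = a2 \<and> a2 * b1 - a1 * b2 \<in> sN Z)"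
proof -
  have "b \<noteq> 0 \<Longrightarrow> x = a / b \<longleftrightarrow> x * b = a" for a b x :: 'a by (auto simp: eq_divide_eq)
  then show ?thesis unfolding sless_def by (auto; metis)
qed

text \<open>In the formula builders below, the first argument \<open>j\<close> is the least index of the bound
  variables they introduce; the indices of their free variables must be positive (variable \<open>0\<close>
  is the free variable of \<open>Z\<close>) and smaller than \<open>j\<close>.\<close>
locale Z_formula =
  fixes Z :: rform
  assumes fvars_Z: "fvars Z \<subseteq> {0}"
begin

definition fInZ :: "nat \<Rightarrow> rform" where
  "fInZ k = FEx 0 (FAnd (FEq (RVar 0) (RVar k)) Z)"

lemma sat_Z: "sat e Z \<longleftrightarrow> e 0 \<in> sZ Z"
proof -
  have "sat e Z = sat (\<lambda>_. e 0) Z" by (rule sat_cong) (use fvars_Z in auto)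
  then show ?thesis by (simp add: sZ_def)
qed

lemma sat_fInZ [simp]: "k \<noteq> 0 \<Longrightarrow> sat e (fInZ k) \<longleftrightarrow> e k \<in> sZ Z"
  by (auto simp: fInZ_def sat_Z)

lemma fvars_fInZ [simp]: "k \<noteq> 0 \<Longrightarrow> fvars (fInZ k) = {k}"
  using fvars_Z by (auto simp: fInZ_def)

definition fInN :: "nat \<Rightarrow> nat \<Rightarrow> rform" where
  "fInN j k = FEx j (FEx (j+1) (FEx (j+2) (FEx (j+3)
     (fConj [fInZ j, fInZ (j+1), fInZ (j+2), fInZ (j+3),
       FEq (RVar k) (RAdd (RAdd (RAdd (RMul (RVar j) (RVar j)) (RMul (RVar (j+1)) (RVar (j+1))))
         (RMul (RVar (j+2)) (RVar (j+2)))) (RMul (RVar (j+3)) (RVar (j+3))))]))))"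

lemma sat_fInN [simp]: "0 < k \<Longrightarrow> k < j \<Longrightarrow> sat e (fInN j k) \<longleftrightarrow> e k \<in> sN Z"
  by (auto simp: fInN_def sN_def power2_eq_square)

lemma fvars_fInN [simp]: "0 < k \<Longrightarrow> k < j \<Longrightarrow> fvars (fInN j k) = {k}"
  by (auto simp: fInN_def)

definition fDvd :: "nat \<Rightarrow> nat \<Rightarrow> nat \<Rightarrow> rform" where
  "fDvd j x y = FEx j (fConj [fInZ j, fNe (RVar j) RZero, FEq (RVar y) (RMul (RVar j) (RVar x))])"

lemma sat_fDvd [simp]: "0 < x \<Longrightarrow> 0 < y \<Longrightarrow> x < j \<Longrightarrow> y < j \<Longrightarrow>
    sat e (fDvd j x y) \<longleftrightarrow> sdvd Z (e x) (e y)"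
  by (auto simp: fDvd_def sdvd_def)

lemma fvars_fDvd [simp]: "0 < x \<Longrightarrow> 0 < y \<Longrightarrow> x < j \<Longrightarrow> y < j \<Longrightarrow>
    fvars (fDvd j x y) = {x, y}"
  by (auto simp: fDvd_def)

definition fPrime :: "nat \<Rightarrow> nat \<Rightarrow> rform" where
  "fPrime j p = fConj [fInN j p, fNe (RVar p) ROne,
     fAll j (fImp (FAnd (fInZ j) (fDvd (j+1) j p))
       (fOr (FEq (RVar j) ROne) (fOr (FEq (RVar j) (RNeg ROne))
         (fOr (FEq (RVar j) (RVar p)) (FEq (RVar j) (RNeg (RVar p)))))))]"

lemma sat_fPrime [simp]: "0 < p \<Longrightarrow> p < j \<Longrightarrow> sat e (fPrime j p) \<longleftrightarrow> e p \<in> sprimes Z"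
  by (auto simp: fPrime_def sprimes_def)

lemma fvars_fPrime [simp]: "0 < p \<Longrightarrow> p < j \<Longrightarrow> fvars (fPrime j p) = {p}"
  by (auto simp: fPrime_def)

definition fPowN :: "nat \<Rightarrow> nat \<Rightarrow> nat \<Rightarrow> rform" where
  "fPowN j p y = FAnd (fInN j y) (fOr (FEq (RVar y) ROne)
     (fAll j (fImp (fConj [fInN (j+1) j, fNe (RVar j) ROne, fNe (RVar j) (RNeg ROne),
         fDvd (j+1) j y]) (fDvd (j+1) p j))))"

lemma sat_fPowN [simp]: "0 < p \<Longrightarrow> 0 < y \<Longrightarrow> p < j \<Longrightarrow> y < j \<Longrightarrow>
    sat e (fPowN j p y) \<longleftrightarrow> e y \<in> ppowN Z (e p)"
  by (auto simp: fPowN_def ppowN_def)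

lemma fvars_fPowN [simp]: "0 < p \<Longrightarrow> 0 < y \<Longrightarrow> p < j \<Longrightarrow> y < j \<Longrightarrow>
    fvars (fPowN j p y) = {p, y}"
  by (auto simp: fPowN_def)

definition fDpZ :: "nat \<Rightarrow> nat \<Rightarrow> nat \<Rightarrow> nat \<Rightarrow> rform" where
  "fDpZ j p x u = fConj [fPowN j p u, fDvd j u x,
     FNot (FEx j (FAnd (FEq (RVar j) (RMul (RVar p) (RVar u))) (fDvd (j+1) j x)))]"

lemma sat_fDpZ [simp]: "0 < p \<Longrightarrow> 0 < x \<Longrightarrow> 0 < u \<Longrightarrow> p < j \<Longrightarrow> x < j \<Longrightarrow> u < j \<Longrightarrow>
    sat e (fDpZ j p x u) \<longleftrightarrow> is_dpZ Z (e p) (e x) (e u)"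
  by (auto simp: fDpZ_def is_dpZ_def)

lemma fvars_fDpZ [simp]: "0 < p \<Longrightarrow> 0 < x \<Longrightarrow> 0 < u \<Longrightarrow> p < j \<Longrightarrow> x < j \<Longrightarrow> u < j \<Longrightarrow>
    fvars (fDpZ j p x u) = {p, x, u}"
  by (auto simp: fDpZ_def)

definition fDpQ :: "nat \<Rightarrow> nat \<Rightarrow> nat \<Rightarrow> nat \<Rightarrow> rform" where
  "fDpQ j p a r = FEx j (FEx (j+1) (FEx (j+2) (FEx (j+3)
     (fConj [fInZ j, fInZ (j+1), fNe (RVar j) RZero, fNe (RVar (j+1)) RZero,
       FEq (RMul (RVar a) (RVar (j+1))) (RVar j),
       fDpZ (j+4) p j (j+2), fDpZ (j+4) p (j+1) (j+3),
       FEq (RMul (RVar r) (RVar (j+3))) (RVar (j+2))]))))"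

lemma sat_fDpQ [simp]: "0 < p \<Longrightarrow> 0 < a \<Longrightarrow> 0 < r \<Longrightarrow> p < j \<Longrightarrow> a < j \<Longrightarrow> r < j \<Longrightarrow>
    sat e (fDpQ j p a r) \<longleftrightarrow> is_dpQ Z (e p) (e a) (e r)"
  by (auto simp: fDpQ_def is_dpQ_def)

lemma fvars_fDpQ [simp]: "0 < p \<Longrightarrow> 0 < a \<Longrightarrow> 0 < r \<Longrightarrow> p < j \<Longrightarrow> a < j \<Longrightarrow> r < j \<Longrightarrow>
    fvars (fDpQ j p a r) = {p, a, r}"
  by (auto simp: fDpQ_def)

definition fLess :: "nat \<Rightarrow> nat \<Rightarrow> nat \<Rightarrow> rform" where
  "fLess j x y = FAnd (fNe (RVar x) (RVar y)) (FEx j (FEx (j+1) (FEx (j+2) (FEx (j+3)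
     (fConj [fInZ j, fInZ (j+1), fInN (j+4) (j+2), fNe (RVar (j+2)) RZero,
       fInN (j+4) (j+3), fNe (RVar (j+3)) RZero,
       FEq (RMul (RVar x) (RVar (j+2))) (RVar j), FEq (RMul (RVar y) (RVar (j+3))) (RVar (j+1)),
       FEx (j+4) (FAnd (FEq (RVar (j+4))
           (RAdd (RMul (RVar (j+1)) (RVar (j+2))) (RNeg (RMul (RVar j) (RVar (j+3))))))
         (fInN (j+5) (j+4)))])))))"

lemma sat_fLess [simp]: "0 < x \<Longrightarrow> 0 < y \<Longrightarrow> x < j \<Longrightarrow> y < j \<Longrightarrow>
    sat e (fLess j x y) \<longleftrightarrow> sless Z (e x) (e y)"
  by (auto simp: fLess_def sless_iff_mult)

lemma fvars_fLess [simp]: "0 < x \<Longrightarrow> 0 < y \<Longrightarrow> x < j \<Longrightarrow> y < j \<Longrightarrow>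
    fvars (fLess j x y) = {x, y}"
  by (auto simp: fLess_def)

end

locale Q_like = Z_formula +
  fixes T :: "'a::field itself"
  assumes is_dpZ_exists:
      "\<And>p x. (p::'a) \<in> sprimes Z \<Longrightarrow> x \<in> sZ Z \<Longrightarrow> x \<noteq> 0 \<Longrightarrow> \<exists>u. is_dpZ Z p x u"
    and is_dpZ_unique: "\<And>p x u u'. (p::'a) \<in> sprimes Z \<Longrightarrow> x \<in> sZ Z \<Longrightarrow> x \<noteq> 0 \<Longrightarrow>
      is_dpZ Z p x u \<Longrightarrow> is_dpZ Z p x u' \<Longrightarrow> u = u'"
    and is_dpQ_exists: "\<And>p a. (p::'a) \<in> sprimes Z \<Longrightarrow> a \<noteq> 0 \<Longrightarrow> \<exists>r. is_dpQ Z p a r"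
    and is_dpQ_unique: "\<And>p a r r'. (p::'a) \<in> sprimes Z \<Longrightarrow> a \<noteq> 0 \<Longrightarrow>
      is_dpQ Z p a r \<Longrightarrow> is_dpQ Z p a r' \<Longrightarrow> r = r'"
    and is_dpQ_mult: "\<And>p a b r s. (p::'a) \<in> sprimes Z \<Longrightarrow> a \<noteq> 0 \<Longrightarrow> b \<noteq> 0 \<Longrightarrow>
      is_dpQ Z p a r \<Longrightarrow> is_dpQ Z p b s \<Longrightarrow> is_dpQ Z p (a * b) (r * s)"
    and is_dpQ_ppowN: "\<And>p a r. (p::'a) \<in> sprimes Z \<Longrightarrow> a \<noteq> 0 \<Longrightarrow> is_dpQ Z p a r \<Longrightarrow>
      r \<in> ppowN Z p \<or> (\<exists>w. w \<in> ppowN Z p \<and> r * w = 1)"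
    and eq_if_is_dpQ_and_pos: "\<And>a b. (a::'a) \<noteq> 0 \<Longrightarrow> b \<noteq> 0 \<Longrightarrow> sless Z 0 (a * b) \<Longrightarrow>
      (\<forall>p\<in>sprimes Z. \<forall>r. is_dpQ Z p a r \<longrightarrow> is_dpQ Z p b r) \<Longrightarrow> a = b"
    and sless_zero_cases: "\<And>x. (x::'a) \<noteq> 0 \<Longrightarrow> sless Z 0 x \<or> sless Z x 0"
    and sless_zero_asym: "\<And>x. sless Z 0 (x::'a) \<Longrightarrow> \<not> sless Z x 0"
    and pos_mult_pos: "\<And>x y. sless Z 0 (x::'a) \<Longrightarrow> sless Z 0 y \<Longrightarrow> sless Z 0 (x * y)"
    and pos_mult_neg: "\<And>x y. sless Z 0 (x::'a) \<Longrightarrow> sless Z y 0 \<Longrightarrow> sless Z (x * y) 0"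
    and neg_mult_pos: "\<And>x y. sless Z (x::'a) 0 \<Longrightarrow> sless Z 0 y \<Longrightarrow> sless Z (x * y) 0"
    and neg_mult_neg: "\<And>x y. sless Z (x::'a) 0 \<Longrightarrow> sless Z y 0 \<Longrightarrow> sless Z 0 (x * y)"
    and one_neq_minus_one: "(1::'a) \<noteq> -1"

context Z_formula
begin

text \<open>The conjuncts of \<open>sQ_like\<close> correspond, in order, to the assumptions of \<open>Q_like\<close>;
  the proof of \<open>sat_sQ_like\<close> matches them positionally.\<close>
definition sQ_like :: rform where
  "sQ_like = fConj [
    fAll 1 (fAll 2 (fImp (fConj [fPrime 10 1, fInZ 2, fNe (RVar 2) RZero])
      (FEx 3 (fDpZ 10 1 2 3)))),
    fAll 1 (fAll 2 (fAll 3 (fAll 4 (fImp (fConj [fPrime 10 1, fInZ 2, fNe (RVar 2) RZero,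
        fDpZ 10 1 2 3, fDpZ 10 1 2 4])
      (FEq (RVar 3) (RVar 4)))))),
    fAll 1 (fAll 2 (fImp (FAnd (fPrime 10 1) (fNe (RVar 2) RZero)) (FEx 3 (fDpQ 10 1 2 3)))),
    fAll 1 (fAll 2 (fAll 3 (fAll 4 (fImp (fConj [fPrime 10 1, fNe (RVar 2) RZero,
        fDpQ 10 1 2 3, fDpQ 10 1 2 4])
      (FEq (RVar 3) (RVar 4)))))),
    fAll 1 (fAll 2 (fAll 3 (fAll 4 (fAll 5 (fImp (fConj [fPrime 10 1, fNe (RVar 2) RZero,
        fNe (RVar 3) RZero, fDpQ 10 1 2 4, fDpQ 10 1 3 5])
      (FEx 6 (FEx 7 (fConj [FEq (RVar 6) (RMul (RVar 2) (RVar 3)),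
        FEq (RVar 7) (RMul (RVar 4) (RVar 5)), fDpQ 10 1 6 7])))))))),
    fAll 1 (fAll 2 (fAll 3 (fImp (fConj [fPrime 10 1, fNe (RVar 2) RZero, fDpQ 10 1 2 3])
      (fOr (fPowN 10 1 3) (FEx 4 (FAnd (fPowN 10 1 4) (FEq (RMul (RVar 3) (RVar 4)) ROne))))))),
    fAll 1 (fAll 2 (fImp (fConj [fNe (RVar 1) RZero, fNe (RVar 2) RZero,
        FEx 3 (FEx 4 (fConj [FEq (RVar 3) RZero, FEq (RVar 4) (RMul (RVar 1) (RVar 2)),
          fLess 10 3 4])),
        fAll 5 (fImp (fPrime 10 5) (fAll 6 (fImp (fDpQ 10 5 1 6) (fDpQ 10 5 2 6))))])
      (FEq (RVar 1) (RVar 2)))),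
    fAll 1 (fImp (fNe (RVar 1) RZero)
      (FEx 2 (FAnd (FEq (RVar 2) RZero) (fOr (fLess 10 2 1) (fLess 10 1 2))))),
    fAll 1 (FEx 2 (FAnd (FEq (RVar 2) RZero) (fImp (fLess 10 2 1) (FNot (fLess 10 1 2))))),
    fAll 1 (fAll 2 (FEx 3 (FEx 4 (fConj [FEq (RVar 3) RZero, FEq (RVar 4) (RMul (RVar 1) (RVar 2)),
      fImp (FAnd (fLess 10 3 1) (fLess 10 3 2)) (fLess 10 3 4)])))),
    fAll 1 (fAll 2 (FEx 3 (FEx 4 (fConj [FEq (RVar 3) RZero, FEq (RVar 4) (RMul (RVar 1) (RVar 2)),
      fImp (FAnd (fLess 10 3 1) (fLess 10 2 3)) (fLess 10 4 3)])))),
    fAll 1 (fAll 2 (FEx 3 (FEx 4 (fConj [FEq (RVar 3) RZero, FEq (RVar 4) (RMul (RVar 1) (RVar 2)),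
      fImp (FAnd (fLess 10 1 3) (fLess 10 3 2)) (fLess 10 4 3)])))),
    fAll 1 (fAll 2 (FEx 3 (FEx 4 (fConj [FEq (RVar 3) RZero, FEq (RVar 4) (RMul (RVar 1) (RVar 2)),
      fImp (FAnd (fLess 10 1 3) (fLess 10 2 3)) (fLess 10 3 4)])))),
    fNe ROne (RNeg ROne)]"

lemma sentence_sQ_like: "sentence sQ_like"
  by (auto simp: sQ_like_def sentence_def)

lemma sat_sQ_like: "sat (\<lambda>_. 0::'a::field) sQ_like \<longleftrightarrow> Q_like TYPE('a) Z"
  unfolding sQ_like_def Q_like_def Q_like_axioms_def sat_fConj list.set ball_simps
  by (simp only: Z_formula_axioms simp_thms conj_assoc, intro arg_cong2[where f = "(\<and>)"]; auto)

end

section \<open>The standard model \<open>\<rat>\<close>\<close>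

lemma prime_dvd_if_dvd_prime_power:
  fixes p c :: int assumes p: "prime p" and c: "c dvd p ^ n" "1 < c" shows "p dvd c"
proof -
  obtain q where q: "prime q" "q dvd c" using prime_divisor_exists[of c] c(2) by auto
  then have "q dvd p" using c(1) dvd_trans prime_dvd_power by blast
  then show ?thesis using q p primes_dvd_imp_eq by blast
qed

lemma prime_power_if_divisors_divisible:
  fixes p i :: int assumes p: "prime p" and "0 < i" and div: "\<And>c. 1 < c \<Longrightarrow> c dvd i \<Longrightarrow> p dvd c"
  obtains n where "i = p ^ n"
proof -
  have "i \<noteq> 0" "\<not> is_unit p" using assms by auto
  then obtain r where r: "i = p ^ multiplicity p i * r" "\<not> p dvd r"
    by (rule multiplicity_decompose')
  have "0 < p ^ multiplicity p i" using prime_gt_0_int[OF p] by simp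
  then have "0 < r" using r(1) \<open>0 < i\<close> by (metis zero_less_mult_pos)
  have "r = 1"
  proof (rule ccontr)
    assume "r \<noteq> 1"
    then obtain q where q: "prime q" "q dvd r" using prime_divisor_exists[of r] \<open>0 < r\<close> by auto
    then have "p dvd q" using div[of q] r(1) prime_gt_1_int by (metis dvd_mult2 mult.commute)
    then show False using q r(2) p primes_dvd_imp_eq by blast
  qed
  then show ?thesis using r(1) that by simp
qed

definition int_dp :: "int \<Rightarrow> int \<Rightarrow> int" where
  "int_dp p x = p ^ multiplicity p x"

lemma int_dp_nonzero: "p = 0 \<or> prime p \<Longrightarrow> int_dp p x \<noteq> 0"
  by (auto simp: int_dp_def)

lemma int_dp_mult: "p = 0 \<or> prime p \<Longrightarrow> x \<noteq> 0 \<Longrightarrow> y \<noteq> 0 \<Longrightarrow>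
    int_dp p (x * y) = int_dp p x * int_dp p y"
  by (auto simp: int_dp_def prime_elem_multiplicity_mult_distrib power_add)

lemma eq_if_int_dp_eq:
  fixes x y :: int
  assumes "x \<noteq> 0" "y \<noteq> 0" "0 < x * y" "\<And>p. prime p \<Longrightarrow> int_dp p x = int_dp p y"
  shows "x = y"
proof -
  have "multiplicity p x = multiplicity p y" if "prime p" for p
    using assms(4)[OF that] prime_gt_1_int[OF that] power_inject_exp by (auto simp: int_dp_def)
  then have "normalize x = normalize y" by (intro multiplicity_eq_imp_eq) (use assms in auto)
  then show ?thesis using assms(3) by (auto simp: zero_less_mult_iff)
qed

locale Z_defines_integers =
  fixes Z :: rform
  assumes defines_Z: "defines_Z_in_Q Z"
begin

sublocale Z_formula using defines_Z by unfold_locales (simp add: defines_Z_in_Q_def)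

lemma sZ_rat: "(x::rat) \<in> sZ Z \<longleftrightarrow> (\<exists>i. x = of_int i)"
  using defines_Z by (auto simp: sZ_def defines_Z_in_Q_def Ints_def)

lemma sN_rat: "(x::rat) \<in> sN Z \<longleftrightarrow> (\<exists>i\<ge>0. x = of_int i)"
proof
  assume "x \<in> sN Z"
  then obtain a' b' c' d' where "a' \<in> sZ Z" "b' \<in> sZ Z" "c' \<in> sZ Z" "d' \<in> sZ Z"
    "x = a'\<^sup>2 + b'\<^sup>2 + c'\<^sup>2 + d'\<^sup>2" unfolding sN_def by blast
  then obtain a b c d where "x = of_int a ^ 2 + of_int b ^ 2 + of_int c ^ 2 + of_int d ^ 2"
    unfolding sZ_rat by metis
  then have "x = of_int (a\<^sup>2 + b\<^sup>2 + c\<^sup>2 + d\<^sup>2)" by simp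
  then show "\<exists>i\<ge>0. x = of_int i" by (intro exI[of _ "a\<^sup>2 + b\<^sup>2 + c\<^sup>2 + d\<^sup>2"]) simp
next
  assume "\<exists>i\<ge>0. x = of_int i"
  then obtain i a b c d where "x = of_int i" "i = a\<^sup>2 + b\<^sup>2 + c\<^sup>2 + d\<^sup>2"
    using sum4sq_nonneg unfolding sum4sq_def by blast
  moreover have "(of_int q :: rat) \<in> sZ Z" for q unfolding sZ_rat by blast
  ultimately show "x \<in> sN Z" unfolding sN_def by force
qed

lemma of_int_in_sN: "0 \<le> i \<Longrightarrow> (of_int i :: rat) \<in> sN Z"
  using sN_rat by blast

lemma sdvd_of_int: "sdvd Z (of_int i :: rat) (of_int j) \<longleftrightarrow> i dvd j \<and> (j = 0 \<longrightarrow> i = 0)"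
proof
  assume "sdvd Z (of_int i :: rat) (of_int j)"
  then obtain z where "z \<in> sZ Z" "z \<noteq> 0" "(of_int j :: rat) = z * of_int i"
    unfolding sdvd_def by blast
  moreover from this obtain k where "z = of_int k" unfolding sZ_rat by blast
  ultimately have "k \<noteq> 0" "j = k * i" by (simp, metis of_int_eq_iff of_int_mult)
  then show "i dvd j \<and> (j = 0 \<longrightarrow> i = 0)" by simp
next
  assume h: "i dvd j \<and> (j = 0 \<longrightarrow> i = 0)"
  have "\<exists>k. k \<noteq> 0 \<and> j = k * i"
  proof (cases "j = 0")
    case True
    then show ?thesis using h by (intro exI[of _ 1]) simp
  next
    case False
    then show ?thesis using h by (auto elim!: dvdE simp: mult.commute)
  qed
  then obtain k where "k \<noteq> 0" "j = k * i" by blast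
  moreover have "(of_int k :: rat) \<in> sZ Z" unfolding sZ_rat by blast
  ultimately show "sdvd Z (of_int i :: rat) (of_int j)"
    unfolding sdvd_def by (intro bexI[of _ "of_int k"]) auto
qed

text \<open>Besides the primes, \<open>0\<close> belongs to \<open>sprimes Z\<close>: its only divisor with nonzero cofactor
  is \<open>0\<close> itself.\<close>
lemma sprimes_rat: "(x::rat) \<in> sprimes Z \<longleftrightarrow> (\<exists>p. x = of_int p \<and> (p = 0 \<or> prime p))"
proof
  assume x: "x \<in> sprimes Z"
  then obtain p where p: "0 \<le> p" "p \<noteq> 1" "x = of_int p" unfolding sprimes_def sN_rat by auto
  have divisors: "e = 1 \<or> e = -1 \<or> e = p \<or> e = -p" if "e dvd p" "p = 0 \<longrightarrow> e = 0" for e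
  proof -
    have "(of_int e :: rat) \<in> sZ Z" unfolding sZ_rat by blast
    moreover have "sdvd Z (of_int e) x" using that p(3) by (simp add: sdvd_of_int)
    ultimately have "(of_int e :: rat) \<in> {1, -1, x, -x}" using x unfolding sprimes_def by auto
    then show ?thesis using p(3) by auto
  qed
  have "prime p" if "p \<noteq> 0"
    unfolding prime_int_iff
  proof (intro conjI allI impI)
    show "1 < p" using p that by simp
    fix m assume "0 \<le> m \<and> m dvd p"
    then show "m = 1 \<or> m = p" using divisors[of m] p that by auto
  qed
  then show "\<exists>p. x = of_int p \<and> (p = 0 \<or> prime p)" using p(3) by blast
next
  assume "\<exists>p. x = of_int p \<and> (p = 0 \<or> prime p)"
  then obtain p where p: "x = of_int p" "p = 0 \<or> prime p" by blast
  have "d = 1 \<or> d = -1 \<or> d = x \<or> d = -x" if "d \<in> sZ Z" "sdvd Z d x" for d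
  proof -
    obtain e where e: "d = of_int e" using \<open>d \<in> sZ Z\<close> sZ_rat by blast
    then have "e dvd p" "p = 0 \<longrightarrow> e = 0" using that(2) p(1) by (simp_all add: sdvd_of_int)
    have "e = 1 \<or> e = -1 \<or> e = p \<or> e = -p"
    proof (cases "p = 0")
      case False
      then have "\<bar>e\<bar> = 1 \<or> \<bar>e\<bar> = p" using p(2) \<open>e dvd p\<close> by (auto simp: prime_int_iff)
      then show ?thesis by linarith
    qed (use \<open>p = 0 \<longrightarrow> e = 0\<close> in simp)
    then show ?thesis using e p(1) by auto
  qed
  moreover have "0 \<le> p" "p \<noteq> 1" using p(2) prime_ge_0_int by auto
  ultimately show "x \<in> sprimes Z" unfolding sprimes_def using p(1) of_int_in_sN by auto
qed

lemma ppowN_rat: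
  assumes p: "prime p" shows "(y::rat) \<in> ppowN Z (of_int p) \<longleftrightarrow> (\<exists>n. y = of_int (p ^ n))"
proof
  assume y: "y \<in> ppowN Z (of_int p)"
  then obtain i where i: "0 \<le> i" "y = of_int i" unfolding ppowN_def sN_rat by auto
  show "\<exists>n. y = of_int (p ^ n)"
  proof (cases "i = 1")
    case True
    then show ?thesis using i by (intro exI[of _ 0]) simp
  next
    case False
    then have all: "sdvd Z (of_int p) z" if "z \<in> sN Z" "z \<noteq> 1" "z \<noteq> -1" "sdvd Z z y" for z
      using y that i(2) unfolding ppowN_def by auto
    have "i \<noteq> 0"
    proof
      assume "i = 0"
      have "sdvd Z (of_int 0) (of_int 0 :: rat)" by (simp only: sdvd_of_int) simp
      then have "sdvd Z (of_int p) (of_int 0 :: rat)"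
        using all[of 0] \<open>i = 0\<close> i(2) of_int_in_sN[of 0] by simp
      then show False using p by (simp only: sdvd_of_int) simp
    qed
    have div_p: "p dvd c" if "1 < c" "c dvd i" for c
    proof -
      have "sdvd Z (of_int c) y" using that \<open>i \<noteq> 0\<close> i(2) by (simp only: sdvd_of_int) simp
      moreover have "(of_int c :: rat) \<in> sN Z" using that(1) of_int_in_sN by simp
      ultimately have "sdvd Z (of_int p) (of_int c :: rat)" using that(1) all by simp
      then show ?thesis by (simp add: sdvd_of_int)
    qed
    have "0 < i" using i(1) \<open>i \<noteq> 0\<close> by simp
    obtain n where "i = p ^ n" using prime_power_if_divisors_divisible[OF p \<open>0 < i\<close> div_p] .
    then show ?thesis using i(2) by blast
  qed
next
  assume "\<exists>n. y = of_int (p ^ n)"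
  then obtain n where n: "y = of_int (p ^ n)" by blast
  have pos: "0 < p ^ n" using prime_gt_0_int[OF p] by simp
  have "sdvd Z (of_int p) z" if "z \<in> sN Z" "z \<noteq> 1" "sdvd Z z y" for z
  proof -
    obtain c where c: "0 \<le> c" "z = of_int c" using \<open>z \<in> sN Z\<close> sN_rat by blast
    have "c dvd p ^ n" "c \<noteq> 0" using that(3) pos unfolding c(2) n by (simp_all only: sdvd_of_int) auto
    moreover have "c \<noteq> 1" using that(2) c(2) by auto
    ultimately have "p dvd c" using prime_dvd_if_dvd_prime_power[OF p] c(1) by simp
    then show ?thesis unfolding c(2) using \<open>c \<noteq> 0\<close> by (simp only: sdvd_of_int) simp
  qed
  moreover have "y \<in> sN Z" using n pos of_int_in_sN[of "p ^ n"] by simp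
  ultimately show "y \<in> ppowN Z (of_int p)" unfolding ppowN_def by blast
qed

lemma is_dpZ_rat:
  assumes p: "p = 0 \<or> prime p" and x: "x \<noteq> 0"
  shows "is_dpZ Z (of_int p :: rat) (of_int x) u \<longleftrightarrow> u = of_int (int_dp p x)"
proof (cases "p = 0")
  case True
  have "u \<in> ppowN Z 0 \<and> sdvd Z u (of_int x) \<longleftrightarrow> u = 1"
  proof
    assume u: "u \<in> ppowN Z 0 \<and> sdvd Z u (of_int x)"
    then obtain i where i: "0 \<le> i" "u = of_int i" unfolding ppowN_def sN_rat by auto
    with u x have "i \<noteq> 0" by (auto simp: sdvd_of_int)
    have "sdvd Z u u" using \<open>i \<noteq> 0\<close> i by (simp add: sdvd_of_int)
    then have "u = 1 \<or> sdvd Z 0 u" using u i of_int_in_sN[of i] unfolding ppowN_def by auto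
    then show "u = 1" using i \<open>i \<noteq> 0\<close> sdvd_of_int[of 0 i] by auto
  qed (use x of_int_in_sN[of 1] in \<open>auto simp: ppowN_def sdvd_of_int[of 1, simplified]\<close>)
  moreover have "\<not> sdvd Z (0 * u) (of_int x :: rat)" using x sdvd_of_int[of 0 x] by simp
  ultimately show ?thesis using True by (simp add: is_dpZ_def int_dp_def)
next
  case False
  then have pr: "prime p" using p by simp
  have not_dvd: "sdvd Z (of_int p * of_int (p ^ n)) (of_int x :: rat) \<longleftrightarrow> p ^ Suc n dvd x" for n
  proof -
    have eq: "(of_int p * of_int (p ^ n) :: rat) = of_int (p ^ Suc n)" by simp
    show ?thesis unfolding eq sdvd_of_int using x by simp
  qed
  show ?thesis
  proof
    assume D: "is_dpZ Z (of_int p :: rat) (of_int x) u"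
    then obtain n where n: "u = of_int (p ^ n)" using ppowN_rat[OF pr] by (auto simp: is_dpZ_def)
    from D have "sdvd Z (of_int (p ^ n)) (of_int x :: rat)"
      "\<not> sdvd Z (of_int p * of_int (p ^ n)) (of_int x :: rat)"
      unfolding is_dpZ_def n by auto
    then have "p ^ n dvd x" "\<not> p ^ Suc n dvd x" unfolding sdvd_of_int not_dvd by simp_all
    then have "multiplicity p x = n" by (rule multiplicity_eqI)
    then show "u = of_int (int_dp p x)" using n by (simp add: int_dp_def)
  next
    assume u: "u = of_int (int_dp p x)"
    have "p ^ multiplicity p x dvd x" by (rule multiplicity_dvd)
    moreover have "\<not> p ^ Suc (multiplicity p x) dvd x"
      using power_dvd_iff_le_multiplicity[of x p "Suc (multiplicity p x)"] x pr by auto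
    ultimately show "is_dpZ Z (of_int p :: rat) (of_int x) u"
      unfolding is_dpZ_def u int_dp_def not_dvd sdvd_of_int ppowN_rat[OF pr] using x by auto
  qed
qed

lemma is_dpQ_rat:
  assumes p: "p = 0 \<or> prime p"
  shows "is_dpQ Z (of_int p :: rat) a r \<longleftrightarrow> (\<exists>x y. x \<noteq> 0 \<and> y \<noteq> 0 \<and> a * of_int y = of_int x \<and>
    r = of_int (int_dp p x) / of_int (int_dp p y))"
proof
  assume "is_dpQ Z (of_int p) a r"
  then obtain x' y' u v where h: "x' \<in> sZ Z" "y' \<in> sZ Z" "x' \<noteq> 0" "y' \<noteq> 0" "a * y' = x'"
    "is_dpZ Z (of_int p) x' u" "is_dpZ Z (of_int p) y' v" "r * v = u"
    unfolding is_dpQ_def by blast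
  obtain x y where xy: "x' = of_int x" "y' = of_int y" using h(1,2) sZ_rat by blast
  then have "x \<noteq> 0" "y \<noteq> 0" using h(3,4) by auto
  moreover have "u = of_int (int_dp p x)" "v = of_int (int_dp p y)"
    using h(6,7) is_dpZ_rat[OF p] \<open>x \<noteq> 0\<close> \<open>y \<noteq> 0\<close> xy by blast+
  ultimately show "\<exists>x y. x \<noteq> 0 \<and> y \<noteq> 0 \<and> a * of_int y = of_int x \<and>
      r = of_int (int_dp p x) / of_int (int_dp p y)"
    using h(5,8) xy int_dp_nonzero[OF p, of y] by (auto simp: eq_divide_eq)
next
  assume "\<exists>x y. x \<noteq> 0 \<and> y \<noteq> 0 \<and> a * of_int y = of_int x \<and>
    r = of_int (int_dp p x) / of_int (int_dp p y)"
  then obtain x y where h: "x \<noteq> 0" "y \<noteq> 0" "a * of_int y = of_int x"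
    "r = of_int (int_dp p x) / of_int (int_dp p y)" by blast
  have "(of_int x :: rat) \<in> sZ Z" "(of_int y :: rat) \<in> sZ Z" using sZ_rat by blast+
  moreover have "is_dpZ Z (of_int p) (of_int x :: rat) (of_int (int_dp p x))"
    "is_dpZ Z (of_int p) (of_int y :: rat) (of_int (int_dp p y))"
    using is_dpZ_rat[OF p] h by blast+
  ultimately show "is_dpQ Z (of_int p) a r" unfolding is_dpQ_def using h int_dp_nonzero[OF p, of y]
    by (intro exI[of _ "of_int x"] exI[of _ "of_int y"] exI[of _ "of_int (int_dp p x)"]
      exI[of _ "of_int (int_dp p y)"]) simp
qed

lemma rat_as_fraction:
  fixes a :: rat obtains n d where "0 < d" "a = of_int n / of_int d"
  by (cases a) (simp add: Fract_of_int_quotient)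

lemma is_dpQ_rat_fraction:
  assumes "p = 0 \<or> prime p" "0 < d" "n \<noteq> 0"
  shows "is_dpQ Z (of_int p) (of_int n / of_int d :: rat)
    (of_int (int_dp p n) / of_int (int_dp p d))"
  using assms unfolding is_dpQ_rat[OF assms(1)] by (intro exI[of _ n] exI[of _ d]) simp

lemma is_dpQ_rat_unique:
  assumes p: "p = 0 \<or> prime p" and "is_dpQ Z (of_int p :: rat) a r" "is_dpQ Z (of_int p :: rat) a r'"
  shows "r = r'"
proof -
  obtain x1 y1 where 1: "x1 \<noteq> 0" "y1 \<noteq> 0" "a * of_int y1 = of_int x1"
    "r = of_int (int_dp p x1) / of_int (int_dp p y1)" using assms(2) is_dpQ_rat[OF p] by blast
  obtain x2 y2 where 2: "x2 \<noteq> 0" "y2 \<noteq> 0" "a * of_int y2 = of_int x2"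
    "r' = of_int (int_dp p x2) / of_int (int_dp p y2)" using assms(3) is_dpQ_rat[OF p] by blast
  have "(of_int (x1 * y2) :: rat) = of_int (x2 * y1)"
    using 1(3) 2(3) by (metis mult.commute mult.left_commute of_int_mult)
  then have "int_dp p x1 * int_dp p y2 = int_dp p x2 * int_dp p y1"
    using int_dp_mult[OF p] 1 2 by (metis of_int_eq_iff)
  then have "(of_int (int_dp p x1) :: rat) * of_int (int_dp p y2) =
      of_int (int_dp p x2) * of_int (int_dp p y1)"
    by (metis of_int_mult)
  then show ?thesis using 1(4) 2(4) int_dp_nonzero[OF p] by (simp add: frac_eq_eq)
qed

lemma is_dpQ_rat_mult:
  assumes p: "p = 0 \<or> prime p" and "is_dpQ Z (of_int p :: rat) a r" "is_dpQ Z (of_int p :: rat) b s"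
  shows "is_dpQ Z (of_int p) (a * b) (r * s)"
proof -
  obtain x1 y1 where 1: "x1 \<noteq> 0" "y1 \<noteq> 0" "a * of_int y1 = of_int x1"
    "r = of_int (int_dp p x1) / of_int (int_dp p y1)" using assms(2) is_dpQ_rat[OF p] by blast
  obtain x2 y2 where 2: "x2 \<noteq> 0" "y2 \<noteq> 0" "b * of_int y2 = of_int x2"
    "s = of_int (int_dp p x2) / of_int (int_dp p y2)" using assms(3) is_dpQ_rat[OF p] by blast
  have "(a * b) * of_int (y1 * y2) = of_int (x1 * x2)" using 1(3) 2(3) by (simp add: algebra_simps)
  moreover have "r * s = of_int (int_dp p (x1 * x2)) / of_int (int_dp p (y1 * y2))"
    using 1 2 by (simp add: int_dp_mult[OF p])
  ultimately show ?thesis unfolding is_dpQ_rat[OF p] using 1 2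
    by (intro exI[of _ "x1 * x2"] exI[of _ "y1 * y2"]) simp
qed

lemma is_dpQ_rat_ppowN:
  assumes p: "prime p" and "is_dpQ Z (of_int p :: rat) a r"
  shows "r \<in> ppowN Z (of_int p) \<or> (\<exists>w. w \<in> ppowN Z (of_int p) \<and> r * w = 1)"
proof -
  obtain x y where "r = of_int (int_dp p x) / of_int (int_dp p y)"
    using assms(2) is_dpQ_rat p by blast
  then have r: "r = of_int p ^ multiplicity p x / of_int p ^ multiplicity p y"
    by (simp add: int_dp_def)
  have "(of_int p :: rat) \<noteq> 0" using p by simp
  show ?thesis
  proof (cases "multiplicity p y \<le> multiplicity p x")
    case True
    then have "r = of_int p ^ (multiplicity p x - multiplicity p y)"
      using r \<open>of_int p \<noteq> 0\<close> by (simp add: power_diff)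
    then have "r = of_int (p ^ (multiplicity p x - multiplicity p y))" by simp
    then show ?thesis using ppowN_rat[OF p] by blast
  next
    case False
    then have "r * of_int p ^ (multiplicity p y - multiplicity p x) = 1"
      using r \<open>of_int p \<noteq> 0\<close> by (simp add: power_diff field_simps)
    then have "r * of_int (p ^ (multiplicity p y - multiplicity p x)) = 1" by simp
    moreover have "(of_int (p ^ (multiplicity p y - multiplicity p x)) :: rat) \<in> ppowN Z (of_int p)"
      using ppowN_rat[OF p] by blast
    ultimately show ?thesis by blast
  qed
qed

lemma sless_rat: "sless Z (x::rat) y \<longleftrightarrow> x < y"
proof
  assume "sless Z x y"
  then obtain a1 a2 b1 b2 where h: "x \<noteq> y" "b1 \<in> sN Z" "b1 \<noteq> 0" "b2 \<in> sN Z" "b2 \<noteq> 0"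
    "x * b1 = a1" "y * b2 = a2" "a2 * b1 - a1 * b2 \<in> sN Z" unfolding sless_iff_mult by blast
  have "0 < b1 * b2" using h(2-5) sN_rat by force
  moreover have "(y - x) * (b1 * b2) = a2 * b1 - a1 * b2" using h(6,7) by (simp add: algebra_simps)
  then have "0 \<le> (y - x) * (b1 * b2)" using h(8) sN_rat by force
  ultimately show "x < y" using h(1) by (auto simp: zero_le_mult_iff)
next
  assume "x < y"
  obtain n1 d1 where 1: "0 < d1" "x = of_int n1 / of_int d1" by (rule rat_as_fraction)
  obtain n2 d2 where 2: "0 < d2" "y = of_int n2 / of_int d2" by (rule rat_as_fraction)
  have "(y - x) * (of_int d1 * of_int d2) = of_int (n2 * d1 - n1 * d2)"
    using 1 2 by (simp add: field_simps)
  moreover have "0 < (y - x) * (of_int d1 * of_int d2)" using \<open>x < y\<close> 1 2 by simp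
  ultimately have "0 \<le> n2 * d1 - n1 * d2" by linarith
  then have "(of_int n2 * of_int d1 - of_int n1 * of_int d2 :: rat) \<in> sN Z"
    using of_int_in_sN[of "n2 * d1 - n1 * d2"] by simp
  moreover have "(of_int d1 :: rat) \<in> sN Z" "(of_int d2 :: rat) \<in> sN Z"
    using 1 2 of_int_in_sN by simp_all
  moreover have "(of_int n1 :: rat) \<in> sZ Z" "(of_int n2 :: rat) \<in> sZ Z" using sZ_rat by blast+
  ultimately show "sless Z x y" unfolding sless_iff_mult using \<open>x < y\<close> 1 2
    by (intro conjI exI[of _ "of_int n1"] exI[of _ "of_int n2"] exI[of _ "of_int d1"]
      exI[of _ "of_int d2"]) auto
qed

lemma sprimes_ratE:
  assumes "(q::rat) \<in> sprimes Z" obtains p where "q = of_int p" "p = 0 \<or> prime p"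
  using assms sprimes_rat by blast

lemma rat_dpZ_exists_unique:
  assumes "(q::rat) \<in> sprimes Z" "x \<in> sZ Z" "x \<noteq> 0" shows "\<exists>!u. is_dpZ Z q x u"
proof -
  obtain p i where "q = of_int p" "p = 0 \<or> prime p" "x = of_int i" "i \<noteq> 0"
    using assms sprimes_rat sZ_rat by auto
  then show ?thesis using is_dpZ_rat by simp
qed

lemma rat_dpQ_exists: "(q::rat) \<in> sprimes Z \<Longrightarrow> a \<noteq> 0 \<Longrightarrow> \<exists>r. is_dpQ Z q a r"
  by (elim sprimes_ratE, cases a rule: rat_as_fraction) (auto intro: is_dpQ_rat_fraction)

lemma rat_dpQ_unique: "(q::rat) \<in> sprimes Z \<Longrightarrow> is_dpQ Z q a r \<Longrightarrow> is_dpQ Z q a r' \<Longrightarrow> r = r'"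
  by (elim sprimes_ratE) (use is_dpQ_rat_unique in blast)

lemma rat_dpQ_mult: "(q::rat) \<in> sprimes Z \<Longrightarrow> is_dpQ Z q a r \<Longrightarrow> is_dpQ Z q b s \<Longrightarrow>
    is_dpQ Z q (a * b) (r * s)"
  by (elim sprimes_ratE) (use is_dpQ_rat_mult in blast)

lemma rat_dpQ_ppowN: "(q::rat) \<in> sprimes Z \<Longrightarrow> is_dpQ Z q a r \<Longrightarrow>
    r \<in> ppowN Z q \<or> (\<exists>w. w \<in> ppowN Z q \<and> r * w = 1)"
proof (elim sprimes_ratE)
  fix p assume "q = of_int p" "p = 0 \<or> prime p" "is_dpQ Z q a r"
  moreover have "(1::rat) \<in> ppowN Z q" using of_int_in_sN[of 1] by (simp add: ppowN_def)
  ultimately show ?thesis using is_dpQ_rat_ppowN is_dpQ_rat[of 0] by (auto simp: int_dp_def)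
qed

lemma rat_eq_if_dpQ_and_pos:
  fixes a b :: rat
  assumes "a \<noteq> 0" "b \<noteq> 0" "0 < a * b" and dpQ: "\<forall>q\<in>sprimes Z. \<forall>r. is_dpQ Z q a r \<longrightarrow> is_dpQ Z q b r"
  shows "a = b"
proof -
  obtain n1 d1 where 1: "0 < d1" "a = of_int n1 / of_int d1" by (rule rat_as_fraction)
  obtain n2 d2 where 2: "0 < d2" "b = of_int n2 / of_int d2" by (rule rat_as_fraction)
  have "n1 \<noteq> 0" "n2 \<noteq> 0" using assms(1,2) 1 2 by auto
  have dp_eq: "int_dp p (n1 * d2) = int_dp p (n2 * d1)" if p: "prime p" for p
  proof -
    have "is_dpQ Z (of_int p) b (of_int (int_dp p n1) / of_int (int_dp p d1))"
      using dpQ is_dpQ_rat_fraction[of p d1 n1] sprimes_rat p 1 \<open>n1 \<noteq> 0\<close> by auto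
    then have "(of_int (int_dp p n1) / of_int (int_dp p d1) :: rat) =
        of_int (int_dp p n2) / of_int (int_dp p d2)"
      using is_dpQ_rat_unique is_dpQ_rat_fraction[of p d2 n2] p 2 \<open>n2 \<noteq> 0\<close> by blast
    then have "(of_int (int_dp p n1 * int_dp p d2) :: rat) = of_int (int_dp p n2 * int_dp p d1)"
      using int_dp_nonzero[of p] p by (simp add: frac_eq_eq)
    then have "int_dp p n1 * int_dp p d2 = int_dp p n2 * int_dp p d1" by (simp only: of_int_eq_iff)
    then show ?thesis using p 1 2 \<open>n1 \<noteq> 0\<close> \<open>n2 \<noteq> 0\<close> by (simp add: int_dp_mult)
  qed
  have pos: "0 < (n1 * d2) * (n2 * d1)"
  proof -
    have "0 < (a * b) * (of_int d1 * of_int d2)\<^sup>2"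
      by (rule mult_pos_pos[OF assms(3)]) (use 1 2 in simp)
    also have "\<dots> = of_int ((n1 * d2) * (n2 * d1))"
      using 1 2 by (simp add: field_simps power2_eq_square)
    finally show ?thesis by (simp only: of_int_0_less_iff)
  qed
  have "n1 * d2 = n2 * d1"
    by (rule eq_if_int_dp_eq[OF _ _ pos dp_eq]) (use \<open>n1 \<noteq> 0\<close> \<open>n2 \<noteq> 0\<close> 1 2 in auto)
  then show ?thesis using 1 2 by (simp add: frac_eq_eq flip: of_int_mult)
qed

lemma Q_like_rat: "Q_like TYPE(rat) Z"
proof unfold_locales
  show "\<exists>u. is_dpZ Z p x u" "is_dpZ Z p x u \<Longrightarrow> is_dpZ Z p x u' \<Longrightarrow> u = u'"
    if "p \<in> sprimes Z" "x \<in> sZ Z" "x \<noteq> 0" for p x u u' :: rat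
    using rat_dpZ_exists_unique[OF that] by auto
qed (auto simp: sless_rat rat_dpQ_exists rat_dpQ_unique rat_dpQ_mult rat_dpQ_ppowN
  rat_eq_if_dpQ_and_pos mult_pos_neg mult_neg_pos mult_neg_neg)

end

section \<open>Transfer to \<open>\<^sup>*\<rat>\<close>\<close>

lemma Q_like_if_elem_equiv_Q:
  assumes "defines_Z_in_Q Z" "elem_equiv_Q TYPE('a::field)"
  shows "Q_like TYPE('a) Z"
proof -
  interpret Z_defines_integers Z by unfold_locales (rule assms(1))
  have "sat (\<lambda>_. 0::rat) sQ_like" using Q_like_rat sat_sQ_like by blast
  then have "sat (\<lambda>_. 0::'a) sQ_like"
    using assms(2) sentence_sQ_like unfolding elem_equiv_Q_def by blast
  then show ?thesis using sat_sQ_like by blast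
qed

context Q_like
begin

lemma is_dpZ_dpZ:
  assumes "(p::'a) \<in> sprimes Z" "x \<in> sZ Z" "x \<noteq> 0" shows "is_dpZ Z p x (dpZ Z p x)"
proof -
  have "dpZ Z p x = (THE u. is_dpZ Z p x u)" by (simp add: dpZ_def is_dpZ_def)
  then show ?thesis using is_dpZ_exists[OF assms] is_dpZ_unique[OF assms] by (metis theI)
qed

lemma is_dpQ_dpQ:
  assumes p: "(p::'a) \<in> sprimes Z" and "a \<noteq> 0" shows "is_dpQ Z p a (dpQ Z p a)"
proof -
  obtain x y where xy: "x \<in> sZ Z" "y \<in> sZ Z" "x \<noteq> 0" "y \<noteq> 0" "a * y = x"
    using is_dpQ_exists[OF assms] unfolding is_dpQ_def by blast
  then have "a = x / y" by (simp add: eq_divide_eq)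
  then have "\<exists>x\<in>sZ Z. \<exists>y\<in>sZ Z. x \<noteq> 0 \<and> y \<noteq> 0 \<and> a = x / y \<and>
      dpQ Z p a = dpZ Z p x / dpZ Z p y"
    unfolding dpQ_def using xy by (intro someI[where P = "\<lambda>r. \<exists>x\<in>sZ Z. \<exists>y\<in>sZ Z.
      x \<noteq> 0 \<and> y \<noteq> 0 \<and> a = x / y \<and> r = dpZ Z p x / dpZ Z p y"]) blast
  then obtain x' y' where "x' \<in> sZ Z" "y' \<in> sZ Z" "x' \<noteq> 0" "y' \<noteq> 0" "a = x' / y'"
    "dpQ Z p a = dpZ Z p x' / dpZ Z p y'" by blast
  moreover have "dpZ Z p y' \<noteq> 0" using is_dpZ_dpZ[OF p \<open>y' \<in> sZ Z\<close> \<open>y' \<noteq> 0\<close>] \<open>y' \<noteq> 0\<close>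
    by (auto simp: is_dpZ_def sdvd_def)
  ultimately show ?thesis unfolding is_dpQ_def using is_dpZ_dpZ[OF p]
    by (intro exI[of _ x'] exI[of _ y'] exI[of _ "dpZ Z p x'"] exI[of _ "dpZ Z p y'"]) auto
qed

lemma dpQ_eqI: "(p::'a) \<in> sprimes Z \<Longrightarrow> a \<noteq> 0 \<Longrightarrow> is_dpQ Z p a r \<Longrightarrow> dpQ Z p a = r"
  using is_dpQ_unique is_dpQ_dpQ by blast

lemma dpQ_mult:
  assumes "(p::'a) \<in> sprimes Z" "a \<noteq> 0" "b \<noteq> 0"
  shows "dpQ Z p (a * b) = dpQ Z p a * dpQ Z p b"
proof -
  have "is_dpQ Z p (a * b) (dpQ Z p a * dpQ Z p b)"
    using is_dpQ_mult[OF assms is_dpQ_dpQ is_dpQ_dpQ] assms by simp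
  then show ?thesis using dpQ_eqI assms by simp
qed

lemma dpQ_in_ppowZ:
  assumes "(p::'a) \<in> sprimes Z" "a \<noteq> 0" shows "dpQ Z p a \<in> ppowZ Z p"
  using is_dpQ_ppowN[OF assms is_dpQ_dpQ[OF assms]]
proof
  assume "\<exists>w. w \<in> ppowN Z p \<and> dpQ Z p a * w = 1"
  then obtain w where w: "w \<in> ppowN Z p" "dpQ Z p a * w = 1" by blast
  then have "w \<noteq> 0" by auto
  with w(2) have "dpQ Z p a = 1 / w" by (simp add: eq_divide_eq)
  then show ?thesis unfolding ppowZ_def using w(1) by blast
qed (simp add: ppowZ_def)

lemma ssgn_pos: "sless Z 0 (a::'a) \<Longrightarrow> ssgn Z a = 1"
  by (simp add: ssgn_def)

lemma ssgn_neg: "sless Z (a::'a) 0 \<Longrightarrow> ssgn Z a = -1"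
  using sless_zero_asym by (auto simp: ssgn_def)

lemma ssgn_cases:
  assumes "(a::'a) \<noteq> 0"
  obtains "sless Z 0 a" "ssgn Z a = 1" | "sless Z a 0" "ssgn Z a = -1"
  using sless_zero_cases[OF assms] ssgn_pos ssgn_neg by blast

lemma ssgn_mult: "(a::'a) \<noteq> 0 \<Longrightarrow> b \<noteq> 0 \<Longrightarrow> ssgn Z (a * b) = ssgn Z a * ssgn Z b"
  by (elim ssgn_cases) (simp_all add: ssgn_pos ssgn_neg pos_mult_pos pos_mult_neg neg_mult_pos neg_mult_neg)

lemma eq_if_dpQ_eq_and_pos:
  assumes "(a::'a) \<noteq> 0" "b \<noteq> 0" "\<forall>p\<in>sprimes Z. dpQ Z p a = dpQ Z p b" "sless Z 0 (a * b)"
  shows "a = b"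
proof -
  have "\<forall>p\<in>sprimes Z. \<forall>r. is_dpQ Z p a r \<longrightarrow> is_dpQ Z p b r"
  proof (intro ballI allI impI)
    fix p r assume "p \<in> sprimes Z" "is_dpQ Z p a r"
    then have "r = dpQ Z p b" using dpQ_eqI assms by metis
    then show "is_dpQ Z p b r" using is_dpQ_dpQ \<open>p \<in> sprimes Z\<close> assms(2) by simp
  qed
  then show ?thesis using eq_if_is_dpQ_and_pos assms by blast
qed

lemma pos_if_ssgn_eq:
  assumes "(a::'a) \<noteq> 0" "b \<noteq> 0" "ssgn Z a = ssgn Z b" shows "sless Z 0 (a * b)"
  using assms one_neq_minus_one by (elim ssgn_cases) (auto intro: pos_mult_pos neg_mult_neg)

end

theorem theorem3p2:
  fixes Z :: rform
  assumes hZ: "defines_Z_in_Q Z"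
    and hQ: "elem_equiv_Q TYPE('a::field)"
  shows "(\<forall>a0 a1 :: 'a. a0 \<noteq> 0 \<longrightarrow> a1 \<noteq> 0 \<longrightarrow>
            (a0 = a1 \<longleftrightarrow> (\<forall>p\<in>sprimes Z. dpQ Z p a0 = dpQ Z p a1) \<and> sless Z 0 (a0 * a1)))
       \<and> (\<forall>a :: 'a. a \<noteq> 0 \<longrightarrow> (\<forall>p\<in>sprimes Z. dpQ Z p a \<in> ppowZ Z p) \<and> ssgn Z a \<in> {1, -1})
       \<and> (\<forall>a b :: 'a. a \<noteq> 0 \<longrightarrow> b \<noteq> 0 \<longrightarrow>
            (\<forall>p\<in>sprimes Z. dpQ Z p (a * b) = dpQ Z p a * dpQ Z p b)
            \<and> ssgn Z (a * b) = ssgn Z a * ssgn Z b)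
       \<and> (\<forall>a b :: 'a. a \<noteq> 0 \<longrightarrow> b \<noteq> 0 \<longrightarrow>
            (\<forall>p\<in>sprimes Z. dpQ Z p a = dpQ Z p b) \<longrightarrow> ssgn Z a = ssgn Z b \<longrightarrow> a = b)"
proof -
  interpret Q_like Z "TYPE('a)" using Q_like_if_elem_equiv_Q[OF hZ hQ] .
  have "sless Z 0 (a * a)" if "a \<noteq> 0" for a :: 'a
    using pos_if_ssgn_eq[OF that that] by simp
  moreover have "ssgn Z a \<in> {1, -1}" if "a \<noteq> 0" for a :: 'a
    using that by (cases rule: ssgn_cases) simp_all
  ultimately show ?thesis
    by (auto intro: eq_if_dpQ_eq_and_pos dpQ_in_ppowZ dpQ_mult ssgn_mult pos_if_ssgn_eq)
qed

end
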